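(* $R_3(L) \le 2593$. That is, for every coloring of the lattice grid $[2593]\times[2593]$ with 3 colors there exist integers $i,j$ and $t\ge 1$ such that the three points $(i,j)$, $(i,j+t)$, $(i+t,j+t)$ all lie in the grid and all receive the same color.
   Context: For $n\in\mathbb{N}$, $[n]=\{1,\dots,n\}$. An $L$ in the grid $[n]\times[n]$ is a set of three lattice points of the form $\{(i,j),(i,j+t),(i+t,j+t)\}$ with $t$ a positive integer (an isosceles right triangle). A $c$-coloring of the grid is a function $[n]\times[n]\to[c]$. $R_c(L)$ denotes the least $n$ such that every $c$-coloring of $[n]\times[n]$ contains a monochromatic $L$. *)

theory Defs
  imports Main
begin

definition grid :: "nat \<Rightarrow> (nat \<times> nat) set" where
  "grid n = {1..n} \<times> {1..n}"

definition coloring :: "nat \<Rightarrow> nat \<Rightarrow> (nat \<times> nat \<Rightarrow> nat) \<Rightarrow> bool" where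
  "coloring c n f \<longleftrightarrow> (\<forall>p \<in> grid n. f p \<in> {1..c})"

definition has_mono_L :: "nat \<Rightarrow> (nat \<times> nat \<Rightarrow> nat) \<Rightarrow> bool" where
  "has_mono_L n f \<longleftrightarrow> (\<exists>i j t. t \<ge> 1 \<and>
      (i, j) \<in> grid n \<and> (i, j + t) \<in> grid n \<and> (i + t, j + t) \<in> grid n \<and>
      f (i, j) = f (i, j + t) \<and> f (i, j + t) = f (i + t, j + t))"

end

theory Submission
  imports Defs "HOL-Analysis.Convex"
begin

(*
  Suppose f has no monochromatic L. Fix a distance t and call x a (c, d)-pattern if
  (x, x) and (x + t, x + t) have colour c and (x, x + t) has colour d; then c \<noteq> d.
  For patterns x < y the point (x, y + t) must get the third colour, so if a, a + s, b, b + s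
  are patterns, the third-colour points (a, a + s + t), (a, b + s + t), (b, b + s + t) form an L.
  Hence every pattern class is a Sidon set in [n], of size at most 72 for n = 2593, and the
  number of equally coloured diagonal pairs at distance t is at most min (6 * 72, n - t).
  Summing over t gives at most 1073088 equally coloured pairs on the diagonal, whereas by
  convexity a 3-colouring of the diagonal has at least (n^2/3 - n)/2 > 1119300 of them.
*)

lemma has_mono_LI:
  assumes "1 \<le> i" "1 \<le> j" "j < k" "k \<le> n" "l \<le> n" "i + k = l + j"
    and "f (i, j) = f (i, k)" "f (i, k) = f (l, k)"
  shows "has_mono_L n f"
  unfolding has_mono_L_def grid_def
proof (intro exI conjI)
  show "f (i, j) = f (i, j + (k - j))" "f (i, j + (k - j)) = f (i + (k - j), j + (k - j))"
    using assms by (simp_all add: add.commute)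
qed (use assms in auto)

definition less_pairs :: "'a::linorder set \<Rightarrow> ('a \<times> 'a) set" where
  "less_pairs S = {(x, y). x \<in> S \<and> y \<in> S \<and> x < y}"

definition mono_pairs :: "('a::linorder \<Rightarrow> 'b) \<Rightarrow> 'a set \<Rightarrow> ('a \<times> 'a) set" where
  "mono_pairs g S = {(x, y). x \<in> S \<and> y \<in> S \<and> x < y \<and> g x = g y}"

lemma finite_less_pairs: "finite S \<Longrightarrow> finite (less_pairs S)"
  unfolding less_pairs_def by (rule finite_subset[of _ "S \<times> S"]) auto

lemma card_less_pairs:
  assumes "finite S"
  shows "2 * card (less_pairs S) + card S = (card S)\<^sup>2"
proof -
  define diagonal where "diagonal = (\<lambda>x. (x, x)) ` S"
  define greater where "greater = (\<lambda>(x, y). (y, x)) ` less_pairs S"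
  have "S \<times> S = diagonal \<union> (less_pairs S \<union> greater)"
  proof (intro equalityI subsetI)
    fix p assume "p \<in> S \<times> S"
    then obtain x y where "p = (x, y)" "x \<in> S" "y \<in> S" by blast
    then show "p \<in> diagonal \<union> (less_pairs S \<union> greater)"
      unfolding diagonal_def less_pairs_def greater_def by (cases x y rule: linorder_cases) auto
  qed (auto simp: diagonal_def less_pairs_def greater_def)
  moreover have "diagonal \<inter> (less_pairs S \<union> greater) = {}" "less_pairs S \<inter> greater = {}"
    unfolding diagonal_def less_pairs_def greater_def by auto
  moreover have "card greater = card (less_pairs S)"
    unfolding greater_def by (rule card_image) (auto simp: inj_on_def)
  moreover have "card diagonal = card S"
    unfolding diagonal_def by (rule card_image) (auto simp: inj_on_def)
  moreover have "finite diagonal" "finite greater"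
    unfolding diagonal_def greater_def using assms finite_less_pairs[OF assms] by simp_all
  ultimately have "card (S \<times> S) = card S + 2 * card (less_pairs S)"
    using finite_less_pairs[OF assms] by (simp add: card_Un_disjoint)
  then show ?thesis by (simp add: card_cartesian_product power2_eq_square)
qed

lemma card_le_if_inj_on_differences:
  fixes A :: "nat set"
  assumes A: "A \<subseteq> {1..n}" and inj: "inj_on (\<lambda>(x, y). y - x) (less_pairs A)"
  shows "card A * (card A - 1) \<le> 2 * (n - 1)"
proof -
  have "(\<lambda>(x, y). y - x) ` less_pairs A \<subseteq> {1..<n}"
    unfolding less_pairs_def by (auto dest!: subsetD[OF A])
  then have "card ((\<lambda>(x, y). y - x) ` less_pairs A) \<le> n - 1"
    using card_mono[of "{1..<n}"] by fastforce
  then have "card (less_pairs A) \<le> n - 1"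
    by (simp add: card_image[OF inj])
  moreover have "2 * card (less_pairs A) + card A = (card A)\<^sup>2"
    using finite_subset[OF A] by (intro card_less_pairs) simp
  moreover have "(card A)\<^sup>2 = card A * (card A - 1) + card A"
    by (cases "card A") (simp_all add: power2_eq_square)
  ultimately show ?thesis by linarith
qed

lemma le_if_mult_pred_less:
  fixes k m :: nat
  assumes "k * (k - 1) < (m + 1) * m"
  shows "k \<le> m"
proof (rule ccontr)
  assume "\<not> k \<le> m"
  then have "(m + 1) * m \<le> k * (k - 1)" by (intro mult_mono) auto
  with assms show False by simp
qed

lemma card_mono_pairs_lower:
  fixes g :: "'a::linorder \<Rightarrow> 'b"
  assumes "finite A" "finite C" "g ` A \<subseteq> C"
  shows "(card A)\<^sup>2 \<le> card C * (2 * card (mono_pairs g A) + card A)"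
proof -
  define fibre where "fibre c = {x \<in> A. g x = c}" for c
  have card_A: "card A = (\<Sum>c\<in>C. card (fibre c))"
    unfolding fibre_def card_eq_sum by (rule sum.group[OF assms, symmetric])
  have fin: "finite (mono_pairs g A)"
    using finite_less_pairs[OF assms(1)] unfolding mono_pairs_def less_pairs_def
    by (rule finite_subset[rotated]) auto
  have img: "(\<lambda>p. g (fst p)) ` mono_pairs g A \<subseteq> C"
    using assms(3) unfolding mono_pairs_def by auto
  have "{p \<in> mono_pairs g A. g (fst p) = c} = less_pairs (fibre c)" for c
    unfolding mono_pairs_def less_pairs_def fibre_def by auto
  then have "(\<Sum>c\<in>C. card (less_pairs (fibre c))) = (\<Sum>c\<in>C. card {p \<in> mono_pairs g A. g (fst p) = c})"
    by simp
  also have "\<dots> = card (mono_pairs g A)"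
    unfolding card_eq_sum by (rule sum.group[OF fin assms(2) img])
  finally have card_pairs: "card (mono_pairs g A) = (\<Sum>c\<in>C. card (less_pairs (fibre c)))" ..
  have "2 * card (mono_pairs g A) + card A = (\<Sum>c\<in>C. (card (fibre c))\<^sup>2)"
    unfolding card_A card_pairs sum_distrib_left sum.distrib[symmetric]
    using assms(1) by (intro sum.cong) (simp_all add: card_less_pairs fibre_def)
  moreover have "real ((\<Sum>c\<in>C. card (fibre c))\<^sup>2) \<le> real ((\<Sum>c\<in>C. (card (fibre c))\<^sup>2) * card C)"
    using sum_squared_le_sum_of_squares[of "\<lambda>c. real (card (fibre c))" C] by simp
  ultimately show ?thesis
    unfolding card_A[symmetric] by (simp only: of_nat_le_iff mult.commute)
qed

definition diag_pattern :: "nat \<Rightarrow> (nat \<times> nat \<Rightarrow> nat) \<Rightarrow> nat \<Rightarrow> nat \<Rightarrow> nat \<Rightarrow> nat set" where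
  "diag_pattern n f t c d =
     {x. 1 \<le> x \<and> x + t \<le> n \<and> f (x, x) = c \<and> f (x, x + t) = d \<and> f (x + t, x + t) = c}"

lemma diag_pattern_subset: "diag_pattern n f t c d \<subseteq> {1..n}"
  unfolding diag_pattern_def by auto

lemma diag_pattern_colours_distinct:
  assumes "\<not> has_mono_L n f" "0 < t" "x \<in> diag_pattern n f t c d"
  shows "c \<noteq> d"
  using assms has_mono_LI[of x x "x + t" n "x + t" f] by (auto simp: diag_pattern_def)

lemma diag_pattern_third_colour:
  assumes no_L: "\<not> has_mono_L n f" and "x < y"
    and x: "x \<in> diag_pattern n f t c d" and y: "y \<in> diag_pattern n f t c d"
  shows "f (x, y + t) \<noteq> c" "f (x, y + t) \<noteq> d"
  using no_L assms(2) x y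
    has_mono_LI[of x x "y + t" n "y + t" f] has_mono_LI[of x "x + t" "y + t" n y f]
  by (auto simp: diag_pattern_def)

(* The three third-colour points (a, a + s + t), (a, b + s + t), (b, b + s + t) form an L. *)
lemma diag_pattern_no_repeated_difference:
  assumes col: "coloring 3 n f" and no_L: "\<not> has_mono_L n f" and "0 < t" "a < b" "0 < s"
    and P: "a \<in> diag_pattern n f t c d" "a + s \<in> diag_pattern n f t c d"
      "b \<in> diag_pattern n f t c d" "b + s \<in> diag_pattern n f t c d"
  shows False
proof -
  have range: "f (i, j) \<in> {1..3}" if "1 \<le> i" "i \<le> n" "1 \<le> j" "j \<le> n" for i j
    using col that by (auto simp: coloring_def grid_def)
  from P have bounds: "1 \<le> a" "b + s + t \<le> n" and cd: "f (a, a) = c" "f (a, a + t) = d"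
    by (auto simp: diag_pattern_def)
  note third = diag_pattern_third_colour[OF no_L]
  have "c \<noteq> d" by (rule diag_pattern_colours_distinct[OF no_L \<open>0 < t\<close> P(1)])
  moreover have "c \<in> {1..3}" "d \<in> {1..3}"
    using cd bounds assms(4) range[of a a] range[of a "a + t"] by auto
  moreover have "f (a, a + s + t) \<notin> {c, d}" "f (a, b + s + t) \<notin> {c, d}" "f (b, b + s + t) \<notin> {c, d}"
    using third[of a "a + s"] third[of a "b + s"] third[of b "b + s"] P assms(4,5)
    by (auto simp: add.assoc)
  moreover have "f (a, a + s + t) \<in> {1..3}" "f (a, b + s + t) \<in> {1..3}" "f (b, b + s + t) \<in> {1..3}"
    by (rule range; use bounds assms(4) in linarith)+
  ultimately have "f (a, a + s + t) = f (a, b + s + t)" "f (a, b + s + t) = f (b, b + s + t)"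
    by auto
  then show False
    using no_L has_mono_LI[of a "a + s + t" "b + s + t" n b f] bounds assms(4,5) by auto
qed

lemma inj_on_differences_diag_pattern:
  assumes "coloring 3 n f" "\<not> has_mono_L n f" "0 < t"
  shows "inj_on (\<lambda>(x, y). y - x) (less_pairs (diag_pattern n f t c d))"
proof -
  let ?P = "diag_pattern n f t c d"
  have no_repeat: "a = b" if "a \<in> ?P" "a + s \<in> ?P" "b \<in> ?P" "b + s \<in> ?P" "0 < s" for a b s
    using diag_pattern_no_repeated_difference[OF assms] that
    by (cases a b rule: linorder_cases) blast+
  show ?thesis
  proof (rule inj_onI, clarsimp simp: less_pairs_def)
    fix x y u v
    assume "x \<in> ?P" "y \<in> ?P" "x < y" "u \<in> ?P" "v \<in> ?P" "u < v" "y - x = v - u"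
    moreover obtain s where "y = x + s" "v = u + s" "0 < s"
      using calculation by (intro that[of "y - x"]) auto
    ultimately show "x = u \<and> y = v" using no_repeat[of x s u] by simp
  qed
qed

lemma card_diag_pattern_le:
  assumes "coloring 3 n f" "\<not> has_mono_L n f" "0 < t"
  shows "card (diag_pattern n f t c d) * (card (diag_pattern n f t c d) - 1) \<le> 2 * (n - 1)"
  by (rule card_le_if_inj_on_differences[OF diag_pattern_subset inj_on_differences_diag_pattern[OF assms]])

definition diag_repeats :: "nat \<Rightarrow> (nat \<times> nat \<Rightarrow> nat) \<Rightarrow> nat \<Rightarrow> nat set" where
  "diag_repeats n f t = {x. 1 \<le> x \<and> x + t \<le> n \<and> f (x, x) = f (x + t, x + t)}"

lemma diag_repeats_subset: "diag_repeats n f t \<subseteq> {1..n - t}"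
  unfolding diag_repeats_def by auto

lemma card_diag_repeats_le_distance: "card (diag_repeats n f t) \<le> n - t"
  using card_mono[OF finite_atLeastAtMost diag_repeats_subset] by simp

lemma diag_repeats_subset_diag_patterns:
  assumes col: "coloring 3 n f" and no_L: "\<not> has_mono_L n f" and "0 < t"
  shows "diag_repeats n f t \<subseteq> (\<Union>c\<in>{1..3}. \<Union>d\<in>{1..3} - {c}. diag_pattern n f t c d)"
proof
  fix x assume x: "x \<in> diag_repeats n f t"
  then have "x \<in> diag_pattern n f t (f (x, x)) (f (x, x + t))"
    by (auto simp: diag_repeats_def diag_pattern_def)
  moreover have "f (x, x) \<in> {1..3}" "f (x, x + t) \<in> {1..3}"
    using col x by (auto simp: coloring_def grid_def diag_repeats_def)
  moreover have "f (x, x) \<noteq> f (x, x + t)"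
    using diag_pattern_colours_distinct[OF no_L \<open>0 < t\<close> calculation(1)] .
  ultimately show "x \<in> (\<Union>c\<in>{1..3}. \<Union>d\<in>{1..3} - {c}. diag_pattern n f t c d)"
    by (intro UN_I) auto
qed

lemma card_diag_repeats_le:
  assumes "coloring 3 n f" "\<not> has_mono_L n f" "0 < t"
    and bound: "\<And>c d. card (diag_pattern n f t c d) \<le> k"
  shows "card (diag_repeats n f t) \<le> 6 * k"
proof -
  have "card (diag_repeats n f t)
      \<le> card (\<Union>c\<in>{1..3}. \<Union>d\<in>{1..3} - {c}. diag_pattern n f t c d)"
    by (intro card_mono diag_repeats_subset_diag_patterns[OF assms(1-3)])
      (auto intro: finite_subset[OF diag_pattern_subset])
  also have "\<dots> \<le> (\<Sum>c\<in>{1..3}. \<Sum>d\<in>{1..3} - {c}. card (diag_pattern n f t c d))"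
    by (intro order.trans[OF card_UN_le] sum_mono card_UN_le) simp_all
  also have "\<dots> \<le> (\<Sum>c\<in>{1..3::nat}. 2 * k)"
    by (intro sum_mono order.trans[OF sum_bounded_above[OF bound]]) simp
  finally show ?thesis by simp
qed

lemma card_mono_diag_pairs_le:
  "card (mono_pairs (\<lambda>x. f (x, x)) {1..n}) \<le> (\<Sum>t\<in>{1..<n}. card (diag_repeats n f t))"
proof -
  have "mono_pairs (\<lambda>x. f (x, x)) {1..n} \<subseteq> (\<Union>t\<in>{1..<n}. (\<lambda>x. (x, x + t)) ` diag_repeats n f t)"
  proof
    fix p assume "p \<in> mono_pairs (\<lambda>x. f (x, x)) {1..n}"
    then obtain x y where "p = (x, y)" "1 \<le> x" "y \<le> n" "x < y" "f (x, x) = f (y, y)"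
      by (auto simp: mono_pairs_def)
    then have "x \<in> diag_repeats n f (y - x)" "y - x \<in> {1..<n}" "p = (x, x + (y - x))"
      by (auto simp: diag_repeats_def)
    then show "p \<in> (\<Union>t\<in>{1..<n}. (\<lambda>x. (x, x + t)) ` diag_repeats n f t)"
      by blast
  qed
  then have "card (mono_pairs (\<lambda>x. f (x, x)) {1..n})
      \<le> card (\<Union>t\<in>{1..<n}. (\<lambda>x. (x, x + t)) ` diag_repeats n f t)"
    using finite_subset[OF diag_repeats_subset] by (intro card_mono) auto
  also have "\<dots> \<le> (\<Sum>t\<in>{1..<n}. card (diag_repeats n f t))"
    by (intro order.trans[OF card_UN_le] sum_mono card_image_le)
      (simp_all add: finite_subset[OF diag_repeats_subset])
  finally show ?thesis .
qed

lemma sum_le_split_bounds: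
  fixes b :: "nat \<Rightarrow> nat"
  assumes "l \<le> m" "m \<le> n" "\<And>t. t \<in> {l..<m} \<Longrightarrow> b t \<le> K" "\<And>t. t \<in> {m..<n} \<Longrightarrow> b t \<le> K'"
  shows "(\<Sum>t\<in>{l..<n}. b t) \<le> (m - l) * K + (n - m) * K'"
proof -
  have "(\<Sum>t\<in>{l..<n}. b t) = (\<Sum>t\<in>{l..<m}. b t) + (\<Sum>t\<in>{m..<n}. b t)"
    using assms(1,2) by (simp add: sum.atLeastLessThan_concat)
  also have "\<dots> \<le> (m - l) * K + (n - m) * K'"
    using sum_bounded_above[of "{l..<m}" b K] sum_bounded_above[of "{m..<n}" b K'] assms(3,4)
    by (intro add_mono) auto
  finally show ?thesis .
qed

theorem theorem2p3:
  fixes f :: "nat \<times> nat \<Rightarrow> nat"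
  assumes "coloring 3 2593 f"
  shows "has_mono_L 2593 f"
proof (rule ccontr)
  assume no_L: "\<not> has_mono_L 2593 f"
  let ?M = "mono_pairs (\<lambda>x. f (x, x)) {1..2593}"
  have "(card {1..2593::nat})\<^sup>2 \<le> card {1..3::nat} * (2 * card ?M + card {1..2593::nat})"
    using assms by (intro card_mono_pairs_lower) (auto simp: coloring_def grid_def)
  then have lower: "2593\<^sup>2 \<le> 3 * (2 * card ?M + 2593)" by simp
  have pattern: "card (diag_pattern 2593 f t c d) \<le> 72" if "0 < t" for t c d
    using card_diag_pattern_le[OF assms no_L that, of c d] by (intro le_if_mult_pred_less) simp
  have "card ?M \<le> (\<Sum>t\<in>{1..<2593}. card (diag_repeats 2593 f t))"
    by (rule card_mono_diag_pairs_le)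
  also have "\<dots> \<le> (2377 - 1) * (6 * 72) + (2593 - 2377) * (2593 - 2377)"
  proof (rule sum_le_split_bounds)
    fix t :: nat assume "t \<in> {1..<2377}"
    then show "card (diag_repeats 2593 f t) \<le> 6 * 72"
      using card_diag_repeats_le[OF assms no_L _ pattern] by simp
  next
    fix t :: nat assume "t \<in> {2377..<2593}"
    then show "card (diag_repeats 2593 f t) \<le> 2593 - 2377"
      using card_diag_repeats_le_distance[of 2593 f t] by simp arith
  qed simp_all
  finally show False using lower by simp
qed

end
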